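(* Let $S$ be a poset and let $S\otimes_i G_i$ and $S\otimes_i H_i$ be terminating ordered joins in the same shape $S$. Suppose $i_0\in S$ is a maximal element of $S$ and $G_i=H_i$ for all $i\neq i_0$. If $G_{i_0}\not\simeq_0 H_{i_0}$, then $S\otimes_i G_i \not\simeq_0 S\otimes_i H_i$. (Together with the special substitution theorem: $S\otimes_i G_i\simeq_0 S\otimes_i H_i$ if and only if $G_{i_0}\simeq_0 H_{i_0}$.)
   Context: All games are impartial combinatorial games under normal play; a game is determined by its set of options, and $G \to G'$ means $G'$ is an option of $G$. A game is terminating if it admits no infinite sequence of moves. $\mathbf{0}$ denotes the game with no options. The Grundy number of a terminating game $G$ is the ordinal $\Gamma_0(G)=\operatorname{mex}\{\Gamma_0(G') : G\to G'\}$, where $\operatorname{mex}\Lambda$ is the least ordinal not in the set of ordinals $\Lambda$. Games $G,H$ are $0$-equivalent, $G\simeq_0 H$, if $\Gamma_0(G)=\Gamma_0(H)$. Ordered join: for a poset $S$ and a family $(G_i)_{i\in S}$ of games, $S \otimes_i G_i$ is the game whose options are exactly the ordered joins $S \otimes_i G'_i$ obtained by choosing one $i_0\in S$ and an option $G_{i_0}\to G'_{i_0}$, and setting $G'_i=\mathbf{0}$ for all $i>i_0$ and $G'_i=G_i$ for all other $i\ne i_0$. *)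

theory Defs
  imports Main
begin

text \<open>Impartial games are modelled as positions of a game graph: a type 'p of
positions together with a move relation mv, where mv x y means that y is an
option of x.\<close>

definition terminating :: "('p \<Rightarrow> 'p \<Rightarrow> bool) \<Rightarrow> 'p \<Rightarrow> bool" where
  "terminating mv x \<longleftrightarrow> \<not> (\<exists>f. f 0 = x \<and> (\<forall>n. mv (f n) (f (Suc n))))"

text \<open>Ordinals: Grundy values of positions of type 'p are taken in a fixed
well-order on 'p set (of cardinality strictly larger than 'p, hence long enough
that every mex of a set of Grundy values of options exists). Only equality of
Grundy values is used, which is independent of the chosen well-order.\<close>

definition ord_wo :: "('a set \<times> 'a set) set" where
  "ord_wo = (SOME r. well_order_on UNIV r)"

definition mex :: "'a set set \<Rightarrow> 'a set" where
  "mex \<Lambda> = (SOME a. a \<notin> \<Lambda> \<and> (\<forall>b. b \<notin> \<Lambda> \<longrightarrow> (a, b) \<in> ord_wo))"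

definition grundy :: "('p \<Rightarrow> 'p \<Rightarrow> bool) \<Rightarrow> 'p \<Rightarrow> 'p set" where
  "grundy mv = wfrec {(y, x). mv x y \<and> terminating mv x}
                     (\<lambda>f x. mex (f ` {y. mv x y}))"

definition zero_equiv :: "('p \<Rightarrow> 'p \<Rightarrow> bool) \<Rightarrow> 'p \<Rightarrow> 'p \<Rightarrow> bool" where
  "zero_equiv mv G H \<longleftrightarrow> grundy mv G = grundy mv H"

text \<open>Ordered join over a poset S (a subset of an ordered type 'i). z is the
zero game (a position without options). The ordered join of the family G is the
position ojoin S z G of the graph ojoin_mv S z mv on families 'i \<Rightarrow> 'p.\<close>

definition ojoin :: "'i set \<Rightarrow> 'p \<Rightarrow> ('i \<Rightarrow> 'p) \<Rightarrow> ('i \<Rightarrow> 'p)" where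
  "ojoin S z G = (\<lambda>i. if i \<in> S then G i else z)"

definition ojoin_mv :: "'i::order set \<Rightarrow> 'p \<Rightarrow> ('p \<Rightarrow> 'p \<Rightarrow> bool)
                        \<Rightarrow> ('i \<Rightarrow> 'p) \<Rightarrow> ('i \<Rightarrow> 'p) \<Rightarrow> bool" where
  "ojoin_mv S z mv F F' \<longleftrightarrow>
     (\<exists>i0\<in>S. mv (F i0) (F' i0)
        \<and> (\<forall>i\<in>S. i0 < i \<longrightarrow> F' i = z)
        \<and> (\<forall>i\<in>S. i \<noteq> i0 \<and> \<not> i0 < i \<longrightarrow> F' i = F i)
        \<and> (\<forall>i. i \<notin> S \<longrightarrow> F' i = F i))"

end

theory Submission
  imports Defs
begin

text \<open>Positions P, Q of the ordered join that differ only at the maximal index i0 are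
  0-equivalent iff their components at i0 are. Both equivalences are tested with the mex rule
  (equal Grundy values iff neither position has an option of the other's value), and the
  statement is proved by induction on the pair (P, Q). Because i0 is maximal, a move of P either
  moves the component at i0; or it lies below i0, resets i0 to the zero game and is therefore a
  move of Q as well; or it leaves i0 untouched and is mirrored by the same move of Q.\<close>

definition option_rel :: "('p \<Rightarrow> 'p \<Rightarrow> bool) \<Rightarrow> ('p \<times> 'p) set" where
  "option_rel mv = {(y, x). mv x y \<and> terminating mv x}"

lemma terminating_option:
  assumes "terminating mv x" and "mv x y"
  shows "terminating mv y"
  unfolding terminating_def
proof
  assume "\<exists>f. f 0 = y \<and> (\<forall>n. mv (f n) (f (Suc n)))"
  then obtain f where "f 0 = y" and "\<forall>n. mv (f n) (f (Suc n))" by blast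
  then have "\<forall>n. mv (case_nat x f n) (case_nat x f (Suc n))"
    using \<open>mv x y\<close> by (simp split: nat.split)
  then have "\<exists>g. g 0 = x \<and> (\<forall>n. mv (g n) (g (Suc n)))"
    by (intro exI[of _ "case_nat x f"]) simp
  then show False using \<open>terminating mv x\<close> unfolding terminating_def by blast
qed

lemma wf_option_rel: "wf (option_rel mv)"
  unfolding option_rel_def wf_iff_no_infinite_down_chain terminating_def by auto

lemma wf_induct_pair [consumes 1, case_names less]:
  assumes "wf r" and "\<And>x y. (\<And>x' y'. ((x', y'), (x, y)) \<in> r \<Longrightarrow> P x' y') \<Longrightarrow> P x y"
  shows "P x y"
  using wf_induct_rule[OF assms(1), of "\<lambda>(x, y). P x y" "(x, y)"] assms(2) by auto

lemma grundy_mex: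
  assumes "terminating mv x"
  shows "grundy mv x = mex (grundy mv ` {y. mv x y})"
proof -
  have "grundy mv x = mex (cut (grundy mv) (option_rel mv) x ` {y. mv x y})"
    unfolding grundy_def option_rel_def[symmetric] by (subst wfrec[OF wf_option_rel]) simp
  also have "\<dots> = mex (grundy mv ` {y. mv x y})"
    using assms by (auto simp: cut_apply option_rel_def intro!: arg_cong[where f = mex])
  finally show ?thesis .
qed

lemma well_order_ord_wo: "well_order_on UNIV ord_wo"
  unfolding ord_wo_def by (rule someI_ex) (rule well_order_on)

lemma mex_least:
  fixes \<Lambda> :: "'a set set"
  assumes "b0 \<notin> \<Lambda>"
  shows "mex \<Lambda> \<notin> \<Lambda> \<and> (\<forall>b. b \<notin> \<Lambda> \<longrightarrow> (mex \<Lambda>, b) \<in> ord_wo)"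
proof -
  let ?r = "ord_wo :: ('a set \<times> 'a set) set"
  have wf: "wf (?r - Id)" and lin: "linear_order_on UNIV ?r"
    using well_order_ord_wo by (auto simp: well_order_on_def)
  obtain m where m: "m \<in> - \<Lambda>" and min: "\<And>b. (b, m) \<in> ?r - Id \<Longrightarrow> b \<notin> - \<Lambda>"
    by (rule wfE_min[OF wf, of b0 "- \<Lambda>"]) (use assms in auto)
  have "(m, b) \<in> ?r" if "b \<notin> \<Lambda>" for b
  proof (cases "b = m")
    case True
    then show ?thesis
      using lin by (simp add: linear_order_on_def partial_order_on_def preorder_on_def refl_on_def)
  next
    case False
    then have "(b, m) \<notin> ?r" using min that by blast
    then show ?thesis
      using lin False by (auto simp: linear_order_on_def total_on_def)
  qed
  with m have "\<exists>a. a \<notin> \<Lambda> \<and> (\<forall>b. b \<notin> \<Lambda> \<longrightarrow> (a, b) \<in> ?r)" by blast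
  then show ?thesis unfolding mex_def by (rule someI_ex)
qed

lemma grundy_least:
  assumes "terminating mv x"
  shows "grundy mv x \<notin> grundy mv ` {y. mv x y}"
    and "b \<notin> grundy mv ` {y. mv x y} \<Longrightarrow> (grundy mv x, b) \<in> ord_wo"
proof -
  \<comment> \<open>Cantor: the diagonal set is no Grundy value, so the mex below is well defined.\<close>
  have "{y. y \<notin> grundy mv y} \<notin> grundy mv ` {y. mv x y}" by auto
  from mex_least[OF this] show "grundy mv x \<notin> grundy mv ` {y. mv x y}"
    and "b \<notin> grundy mv ` {y. mv x y} \<Longrightarrow> (grundy mv x, b) \<in> ord_wo"
    unfolding grundy_mex[OF assms] by auto
qed

lemma grundy_option_neq:
  assumes "terminating mv x" and "mv x y"
  shows "grundy mv y \<noteq> grundy mv x"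
  using grundy_least(1)[OF assms(1)] assms(2) by auto

lemma grundy_eq_iff:
  fixes mv :: "'p \<Rightarrow> 'p \<Rightarrow> bool"
  assumes "terminating mv x" and "terminating mv y"
  shows "grundy mv x = grundy mv y \<longleftrightarrow>
    (\<forall>x'. mv x x' \<longrightarrow> grundy mv x' \<noteq> grundy mv y) \<and> (\<forall>y'. mv y y' \<longrightarrow> grundy mv y' \<noteq> grundy mv x)"
proof
  assume "grundy mv x = grundy mv y"
  then show "(\<forall>x'. mv x x' \<longrightarrow> grundy mv x' \<noteq> grundy mv y) \<and> (\<forall>y'. mv y y' \<longrightarrow> grundy mv y' \<noteq> grundy mv x)"
    using grundy_option_neq[OF assms(1)] grundy_option_neq[OF assms(2)] by metis
next
  assume opts: "(\<forall>x'. mv x x' \<longrightarrow> grundy mv x' \<noteq> grundy mv y) \<and> (\<forall>y'. mv y y' \<longrightarrow> grundy mv y' \<noteq> grundy mv x)"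
  have "(grundy mv x, grundy mv y) \<in> ord_wo"
    by (rule grundy_least(2)[OF assms(1)]) (use opts in fastforce)
  moreover have "(grundy mv y, grundy mv x) \<in> ord_wo"
    by (rule grundy_least(2)[OF assms(2)]) (use opts in fastforce)
  moreover have "antisym (ord_wo :: ('p set \<times> 'p set) set)"
    using well_order_ord_wo[where 'a = 'p]
    by (simp add: well_order_on_def linear_order_on_def partial_order_on_def)
  ultimately show "grundy mv x = grundy mv y" by (rule antisymD[rotated])
qed

locale ojoin_max_component =
  fixes S :: "'i::order set" and z :: 'p and mv :: "'p \<Rightarrow> 'p \<Rightarrow> bool" and i0 :: 'i
  assumes i0_in: "i0 \<in> S" and i0_maximal: "\<forall>i\<in>S. \<not> i0 < i"
begin

abbreviation jmv :: "('i \<Rightarrow> 'p) \<Rightarrow> ('i \<Rightarrow> 'p) \<Rightarrow> bool" where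
  "jmv \<equiv> ojoin_mv S z mv"

abbreviation agree_off_i0 :: "('i \<Rightarrow> 'p) \<Rightarrow> ('i \<Rightarrow> 'p) \<Rightarrow> bool" where
  "agree_off_i0 P Q \<equiv> \<forall>i. i \<noteq> i0 \<longrightarrow> P i = Q i"

lemma jmv_update_i0:
  assumes "mv (P i0) X"
  shows "jmv P (P(i0 := X))"
  unfolding ojoin_mv_def using assms i0_in i0_maximal by (intro bexI[of _ i0]) auto

lemma terminating_component_i0:
  assumes "terminating jmv P"
  shows "terminating mv (P i0)"
  unfolding terminating_def
proof
  assume "\<exists>f. f 0 = P i0 \<and> (\<forall>n. mv (f n) (f (Suc n)))"
  then obtain f where "f 0 = P i0" and "\<forall>n. mv (f n) (f (Suc n))" by blast
  then have "\<exists>g. g 0 = P \<and> (\<forall>n. jmv (g n) (g (Suc n)))"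
    using jmv_update_i0[of "P(i0 := f _)"] by (intro exI[of _ "\<lambda>n. P(i0 := f n)"]) auto
  then show False using assms unfolding terminating_def by blast
qed

lemma jmv_cases:
  assumes move: "jmv P P'" and agree: "agree_off_i0 P Q"
  obtains X where "mv (P i0) X" and "P' = P(i0 := X)"
  | "jmv Q P'"
  | "P' i0 = P i0" and "jmv Q (P'(i0 := Q i0))"
proof -
  obtain j where jS: "j \<in> S" and mj: "mv (P j) (P' j)"
    and above: "\<forall>i\<in>S. j < i \<longrightarrow> P' i = z"
    and rest: "\<forall>i\<in>S. i \<noteq> j \<and> \<not> j < i \<longrightarrow> P' i = P i"
    and outside: "\<forall>i. i \<notin> S \<longrightarrow> P' i = P i"
    using move unfolding ojoin_mv_def by blast
  consider "j = i0" | "j \<noteq> i0" "j < i0" | "j \<noteq> i0" "\<not> j < i0" by blast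
  then show thesis
  proof cases
    case 1
    have "P' = P(i0 := P' i0)"
    proof
      fix i
      show "P' i = (P(i0 := P' i0)) i"
        using 1 rest outside i0_maximal by (cases "i \<in> S") auto
    qed
    with 1 mj show thesis using that(1) by blast
  next
    case 2
    have "jmv Q P'"
      unfolding ojoin_mv_def
    proof (intro bexI[of _ j] conjI ballI allI impI)
      show "mv (Q j) (P' j)" using mj agree 2 by simp
      show "P' i = Q i" if "i \<in> S" "i \<noteq> j \<and> \<not> j < i" for i
      proof -
        have "i \<noteq> i0" using that 2 by auto
        then show ?thesis using that rest agree by simp
      qed
      show "P' i = Q i" if "i \<notin> S" for i
      proof -
        have "i \<noteq> i0" using that i0_in by auto
        then show ?thesis using that outside agree by simp
      qed
    qed (use jS above in auto)
    then show thesis using that(2) by blast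
  next
    case 3
    have "P' i0 = P i0" using rest i0_in 3 by auto
    moreover have "jmv Q (P'(i0 := Q i0))"
      unfolding ojoin_mv_def
    proof (intro bexI[of _ j] conjI ballI allI impI)
      show "mv (Q j) ((P'(i0 := Q i0)) j)" using mj agree 3 by simp
      show "(P'(i0 := Q i0)) i = z" if "i \<in> S" "j < i" for i
        using that above 3 by auto
      show "(P'(i0 := Q i0)) i = Q i" if "i \<in> S" "i \<noteq> j \<and> \<not> j < i" for i
        using that rest agree by (cases "i = i0") auto
      show "(P'(i0 := Q i0)) i = Q i" if "i \<notin> S" for i
        using that outside agree i0_in by (cases "i = i0") auto
    qed (fact jS)
    ultimately show thesis using that(3) by blast
  qed
qed

lemma option_at_i0_grundy_neq:
  assumes tP: "terminating jmv P" and agree: "agree_off_i0 P Q"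
    and eq: "grundy jmv P = grundy jmv Q"
    and IH: "\<And>P' Q'. jmv P P' \<Longrightarrow> Q' = Q \<or> jmv Q Q' \<Longrightarrow> agree_off_i0 P' Q' \<Longrightarrow>
      grundy jmv P' = grundy jmv Q' \<longleftrightarrow> grundy mv (P' i0) = grundy mv (Q' i0)"
    and "mv (P i0) X"
  shows "grundy mv X \<noteq> grundy mv (Q i0)"
proof -
  have move: "jmv P (P(i0 := X))" by (rule jmv_update_i0) fact
  then have "grundy jmv (P(i0 := X)) \<noteq> grundy jmv Q"
    using grundy_option_neq[of jmv, OF tP move] eq by simp
  then show ?thesis using IH[OF move] agree by auto
qed

lemma jmv_option_grundy_neq:
  assumes tP: "terminating jmv P" and tQ: "terminating jmv Q" and agree: "agree_off_i0 P Q"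
    and eq: "grundy mv (P i0) = grundy mv (Q i0)"
    and IH: "\<And>P' Q'. jmv P P' \<Longrightarrow> Q' = Q \<or> jmv Q Q' \<Longrightarrow> agree_off_i0 P' Q' \<Longrightarrow>
      grundy jmv P' = grundy jmv Q' \<longleftrightarrow> grundy mv (P' i0) = grundy mv (Q' i0)"
    and move: "jmv P P'"
  shows "grundy jmv P' \<noteq> grundy jmv Q"
  using move agree
proof (cases rule: jmv_cases)
  case (1 X)
  then have "grundy jmv P' = grundy jmv Q \<longleftrightarrow> grundy mv X = grundy mv (P i0)"
    using IH[OF move] agree eq by auto
  then show ?thesis
    using grundy_option_neq[OF terminating_component_i0[OF tP] \<open>mv (P i0) X\<close>] by blast
next
  case 2
  then show ?thesis using grundy_option_neq[of jmv, OF tQ] by blast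
next
  case 3
  then have "grundy jmv P' = grundy jmv (P'(i0 := Q i0))"
    using IH[OF move] agree eq by auto
  moreover have "grundy jmv (P'(i0 := Q i0)) \<noteq> grundy jmv Q"
    using grundy_option_neq[of jmv, OF tQ 3(2)] .
  ultimately show ?thesis by simp
qed

lemma grundy_jmv_eq_iff:
  assumes "terminating jmv P" and "terminating jmv Q" and "agree_off_i0 P Q"
  shows "grundy jmv P = grundy jmv Q \<longleftrightarrow> grundy mv (P i0) = grundy mv (Q i0)"
  using wf_lex_prod[OF wf_option_rel[of jmv] wf_option_rel[of jmv]] assms
proof (induction P Q rule: wf_induct_pair)
  case (less P Q)
  note tP = less.prems(1) and tQ = less.prems(2) and agree = less.prems(3)
  have IH_P: "grundy jmv P' = grundy jmv Q' \<longleftrightarrow> grundy mv (P' i0) = grundy mv (Q' i0)"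
    if "jmv P P'" "Q' = Q \<or> jmv Q Q'" "agree_off_i0 P' Q'" for P' Q'
  proof (rule less.IH)
    show "((P', Q'), P, Q) \<in> option_rel jmv <*lex*> option_rel jmv"
      using that(1) tP by (simp add: option_rel_def)
    show "terminating jmv P'" using terminating_option[of jmv, OF tP that(1)] .
    show "terminating jmv Q'" using that(2) terminating_option[of jmv, OF tQ] tQ by blast
  qed fact
  have IH_Q: "grundy jmv Q' = grundy jmv P' \<longleftrightarrow> grundy mv (Q' i0) = grundy mv (P' i0)"
    if "jmv Q Q'" "P' = P \<or> jmv P P'" "agree_off_i0 Q' P'" for Q' P'
  proof -
    have "grundy jmv P' = grundy jmv Q' \<longleftrightarrow> grundy mv (P' i0) = grundy mv (Q' i0)"
    proof (rule less.IH)
      show "((P', Q'), P, Q) \<in> option_rel jmv <*lex*> option_rel jmv"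
        using that(1,2) tP tQ by (auto simp: option_rel_def)
      show "terminating jmv P'" using that(2) terminating_option[of jmv, OF tP] tP by blast
      show "terminating jmv Q'" using terminating_option[of jmv, OF tQ that(1)] .
      show "agree_off_i0 P' Q'" using that(3) by simp
    qed
    then show ?thesis by auto
  qed
  have agree': "agree_off_i0 Q P" using agree by simp
  have tP0: "terminating mv (P i0)" and tQ0: "terminating mv (Q i0)"
    using terminating_component_i0 tP tQ by blast+
  show ?case
  proof
    assume eq: "grundy jmv P = grundy jmv Q"
    have "\<forall>X. mv (P i0) X \<longrightarrow> grundy mv X \<noteq> grundy mv (Q i0)"
      using option_at_i0_grundy_neq[OF tP agree eq IH_P] by blast
    moreover have "\<forall>Y. mv (Q i0) Y \<longrightarrow> grundy mv Y \<noteq> grundy mv (P i0)"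
      using option_at_i0_grundy_neq[OF tQ agree' eq[symmetric] IH_Q] by blast
    ultimately show "grundy mv (P i0) = grundy mv (Q i0)"
      using grundy_eq_iff[OF tP0 tQ0] by blast
  next
    assume eq: "grundy mv (P i0) = grundy mv (Q i0)"
    have "\<forall>P'. jmv P P' \<longrightarrow> grundy jmv P' \<noteq> grundy jmv Q"
      using jmv_option_grundy_neq[OF tP tQ agree eq IH_P] by blast
    moreover have "\<forall>Q'. jmv Q Q' \<longrightarrow> grundy jmv Q' \<noteq> grundy jmv P"
      using jmv_option_grundy_neq[OF tQ tP agree' eq[symmetric] IH_Q] by blast
    ultimately show "grundy jmv P = grundy jmv Q"
      using grundy_eq_iff[OF tP tQ] by blast
  qed
qed

end

theorem mainTheorem4:
  fixes S :: "'i::order set" and mv :: "'p \<Rightarrow> 'p \<Rightarrow> bool" and z :: 'p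
    and G H :: "'i \<Rightarrow> 'p" and i0 :: 'i
  assumes zero: "\<forall>y. \<not> mv z y"
    and termG: "terminating (ojoin_mv S z mv) (ojoin S z G)"
    and termH: "terminating (ojoin_mv S z mv) (ojoin S z H)"
    and i0S: "i0 \<in> S"
    and i0max: "\<forall>i\<in>S. \<not> i0 < i"
    and same: "\<forall>i\<in>S. i \<noteq> i0 \<longrightarrow> G i = H i"
    and neq: "\<not> zero_equiv mv (G i0) (H i0)"
  shows "\<not> zero_equiv (ojoin_mv S z mv) (ojoin S z G) (ojoin S z H)"
proof -
  interpret ojoin_max_component S z mv i0
    using i0S i0max by unfold_locales
  have "\<forall>i. i \<noteq> i0 \<longrightarrow> ojoin S z G i = ojoin S z H i"
    using same by (simp add: ojoin_def)
  moreover have "ojoin S z G i0 = G i0" and "ojoin S z H i0 = H i0"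
    using i0S by (simp_all add: ojoin_def)
  ultimately show ?thesis
    using grundy_jmv_eq_iff[OF termG termH] neq unfolding zero_equiv_def by simp
qed

end
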